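(* Let $Y$ be a first-countable topological space such that $\mathrm{H}_1([0,1],Y)\subseteq \mathrm{B}_1([0,1],Y)$. Then $Y$ is locally almost arcwise connected.
   Context: $\mathrm{H}_1(X,Y)$: mappings $f:X\to Y$ with $f^{-1}(V)$ an $F_\sigma$-set for every open $V\subseteq Y$. $\mathrm{B}_1(X,Y)$: pointwise limits of sequences of continuous mappings $X\to Y$. Two sets $A,B$ are joined by an arc in a set $S$ if there is a continuous $\gamma:[0,1]\to Y$ with $\gamma([0,1])\subseteq S$, $\gamma(0)\in A$, $\gamma(1)\in B$. $Y$ is locally almost arcwise connected at $y$ if for every neighborhood $V$ of $y$ there is a neighborhood $U\subseteq V$ of $y$ such that each pair of nonempty open subsets of $U$ can be joined by an arc in $\overline V$; $Y$ is locally almost arcwise connected if this holds at every point. *)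

theory Defs
  imports "HOL-Analysis.Analysis"
begin

definition fsigma_in_unit :: "real set \<Rightarrow> bool" where
  "fsigma_in_unit S \<longleftrightarrow>
     (\<exists>C :: nat \<Rightarrow> real set. (\<forall>n. closedin (top_of_set {0..1}) (C n)) \<and> S = (\<Union>n. C n))"

definition H1_unit :: "(real \<Rightarrow> 'a::topological_space) \<Rightarrow> bool" where
  "H1_unit f \<longleftrightarrow> (\<forall>V. open V \<longrightarrow> fsigma_in_unit ({0..1} \<inter> f -` V))"

definition B1_unit :: "(real \<Rightarrow> 'a::topological_space) \<Rightarrow> bool" where
  "B1_unit f \<longleftrightarrow> (\<exists>g :: nat \<Rightarrow> real \<Rightarrow> 'a.
      (\<forall>n. continuous_on {0..1} (g n)) \<and>
      (\<forall>x\<in>{0..1}. (\<lambda>n. g n x) \<longlonglongrightarrow> f x))"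

definition is_nhd :: "'a::topological_space set \<Rightarrow> 'a \<Rightarrow> bool" where
  "is_nhd V y \<longleftrightarrow> (\<exists>W. open W \<and> y \<in> W \<and> W \<subseteq> V)"

definition joined_by_arc_in :: "'a::topological_space set \<Rightarrow> 'a set \<Rightarrow> 'a set \<Rightarrow> bool" where
  "joined_by_arc_in A B S \<longleftrightarrow>
     (\<exists>\<gamma> :: real \<Rightarrow> 'a. continuous_on {0..1} \<gamma> \<and> \<gamma> ` {0..1} \<subseteq> S \<and> \<gamma> 0 \<in> A \<and> \<gamma> 1 \<in> B)"

definition loc_almost_arcwise_connected_at :: "'a::topological_space \<Rightarrow> bool" where
  "loc_almost_arcwise_connected_at y \<longleftrightarrow>
     (\<forall>V. is_nhd V y \<longrightarrow>
        (\<exists>U. U \<subseteq> V \<and> is_nhd U y \<and>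
           (\<forall>A B. open A \<and> A \<subseteq> U \<and> A \<noteq> {} \<and> open B \<and> B \<subseteq> U \<and> B \<noteq> {} \<longrightarrow>
                  joined_by_arc_in A B (closure V))))"

definition loc_almost_arcwise_connected :: "'a::topological_space itself \<Rightarrow> bool" where
  "loc_almost_arcwise_connected _ \<longleftrightarrow> (\<forall>y::'a. loc_almost_arcwise_connected_at y)"

end

theory Submission
  imports Defs
begin

text \<open>
  Suppose \<open>Y\<close> is not locally almost arcwise connected at \<open>y\<close>, witnessed by a
  neighbourhood \<open>V\<close>. Running through a countable neighbourhood base at \<open>y\<close> yields pairs of
  nonempty open sets \<open>A\<^sub>n, B\<^sub>n\<close> shrinking to \<open>y\<close> that cannot be joined by an arc in
  \<open>closure V\<close>. Pick \<open>a\<^sub>n \<in> A\<^sub>n\<close>, \<open>b\<^sub>n \<in> B\<^sub>n\<close> and let \<open>f\<close> take the value \<open>a\<^sub>n\<close> on the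
  dyadic rationals of exact level \<open>2n\<close>, \<open>b\<^sub>n\<close> on those of level \<open>2n+1\<close>, and \<open>y\<close>
  elsewhere. As \<open>a\<^sub>n, b\<^sub>n \<rightarrow> y\<close>, the preimage of an open set is countable if it misses
  \<open>y\<close>, and cofinite in \<open>[0,1]\<close> otherwise; so \<open>f \<in> H\<^sub>1\<close>, and by hypothesis \<open>f\<close> is a
  pointwise limit of continuous \<open>g\<^sub>k\<close>. Since \<open>f\<close> maps into the interior of \<open>closure V\<close>, the
  Baire category theorem gives an interval \<open>[c,d]\<close> and \<open>m\<close> with
  \<open>g\<^sub>k([c,d]) \<subseteq> closure V\<close> for all \<open>k \<ge> m\<close>. For large \<open>n\<close>, \<open>[c,d]\<close> contains dyadic points
  \<open>s, t\<close> of levels \<open>2n\<close> and \<open>2n+1\<close>, and for large \<open>k\<close> the restriction of \<open>g\<^sub>k\<close> to the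
  segment between them is an arc in \<open>closure V\<close> from \<open>A\<^sub>n\<close> to \<open>B\<^sub>n\<close>.
\<close>

definition dyadic_level :: "nat \<Rightarrow> real \<Rightarrow> bool" where
  "dyadic_level n x \<longleftrightarrow> (\<exists>i::int. x * 2^n = of_int (2*i+1))"

lemma dyadic_level_unique:
  assumes "dyadic_level n x" "dyadic_level m x" shows "n = m"
proof -
  have False if ln: "dyadic_level n x" and lm: "dyadic_level m x" and "n < m" for n m
  proof -
    obtain i k :: int where i: "x * 2^n = of_int (2*i+1)" and k: "x * 2^m = of_int (2*k+1)"
      using ln lm unfolding dyadic_level_def by blast
    have "x * 2^m = x * 2^n * 2^(m-n)"
      using \<open>n < m\<close> by (simp add: power_add[symmetric])
    hence "2*k+1 = (2*i+1) * 2^(m-n)"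
      using i k by (metis of_int_eq_iff of_int_mult of_int_numeral of_int_power)
    moreover have "even ((2*i+1) * (2::int)^(m-n))" using \<open>n < m\<close> by simp
    ultimately show False by (metis even_plus_one_iff even_mult_iff dvd_triv_left)
  qed
  thus ?thesis using assms by (metis linorder_neqE_nat)
qed

lemma dyadic_level_Rats: "dyadic_level n x \<Longrightarrow> x \<in> \<rat>"
proof -
  assume "dyadic_level n x"
  then obtain i :: int where "x * 2^n = of_int (2*i+1)" unfolding dyadic_level_def by blast
  hence "x = of_int (2*i+1) / 2^n" by (simp add: field_simps)
  thus "x \<in> \<rat>" by simp
qed

lemma finite_dyadic_level_unit: "finite {x\<in>{0..1}. dyadic_level n x}"
proof (rule finite_subset)
  show "{x\<in>{0..1}. dyadic_level n x} \<subseteq> (\<lambda>j. of_int j / 2^n) ` {0..2^n}"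
  proof
    fix x assume x: "x \<in> {x\<in>{0..1}. dyadic_level n x}"
    then obtain i :: int where i: "x * 2^n = of_int (2*i+1)" unfolding dyadic_level_def by blast
    have "0 \<le> x * 2^n" "x * 2^n \<le> 2^n" using x by (auto simp: mult_le_cancel_right1)
    hence "0 \<le> real_of_int (2*i+1)" "real_of_int (2*i+1) \<le> of_int (2^n)" using i by simp_all
    hence "2*i+1 \<in> {0..2^n}" by (simp only: of_int_le_iff atLeastAtMost_iff of_int_0_le_iff)
    moreover have "x = of_int (2*i+1) / 2^n" using i by (simp add: field_simps)
    ultimately show "x \<in> (\<lambda>j. of_int j / 2^n) ` {0..2^n}" by blast
  qed
qed simp

lemma dyadic_level_in_interval:
  fixes c d :: real
  assumes "2 \<le> (d - c) * 2^n"
  obtains x where "x \<in> {c..d}" "dyadic_level n x"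
proof -
  define i where "i = \<lceil>(c * 2^n - 1) / 2\<rceil>"
  have "(c * 2^n - 1) / 2 \<le> i" "i < (c * 2^n - 1) / 2 + 1"
    unfolding i_def by linarith+
  hence "c * 2^n \<le> 2*i+1" "2*i+1 < c * 2^n + 2" by (simp_all add: field_simps)
  hence "of_int (2*i+1) / 2^n \<in> {c..d}" using assms by (simp add: field_simps)
  moreover have "dyadic_level n (of_int (2*i+1) / 2^n)" unfolding dyadic_level_def by auto
  ultimately show ?thesis by (rule that)
qed

lemma fsigma_in_unit_iff: "fsigma_in_unit S \<longleftrightarrow> fsigma_in (top_of_set {0..1}) S"
proof
  assume "fsigma_in_unit S"
  then obtain C :: "nat \<Rightarrow> real set"
    where "\<And>n. closedin (top_of_set {0..1}) (C n)" and S: "S = (\<Union>n. C n)"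
    unfolding fsigma_in_unit_def by blast
  hence "fsigma_in (top_of_set {0..1}) (\<Union>(range C))"
    by (intro fsigma_in_Union[of "range C"]) (auto intro!: closed_imp_fsigma_in)
  thus "fsigma_in (top_of_set {0..1}) S" unfolding S .
next
  assume "fsigma_in (top_of_set {0..1}) S"
  then obtain C :: "nat \<Rightarrow> real set"
    where "\<And>n. closedin (top_of_set {0..1}) (C n)" "\<Union>(range C) = S"
    unfolding fsigma_in_ascending by auto
  thus "fsigma_in_unit S" unfolding fsigma_in_unit_def by auto
qed

lemma countable_imp_fsigma_in_unit:
  assumes "countable S" "S \<subseteq> {0..1}" shows "fsigma_in_unit S"
proof -
  have "S = \<Union>((\<lambda>x. {x}) ` S)" by blast
  also have "fsigma_in (top_of_set {0..1}) \<dots>"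
    using assms by (intro fsigma_in_Union[of "(\<lambda>x. {x}) ` S"]) (auto intro!: closed_imp_fsigma_in)
  finally show ?thesis by (simp add: fsigma_in_unit_iff)
qed

lemma openin_imp_fsigma_in_unit:
  "openin (top_of_set {0..1}) S \<Longrightarrow> fsigma_in_unit S"
  by (simp add: fsigma_in_unit_iff open_imp_fsigma_in metrizable_space_subtopology
      metrizable_space_euclidean)

definition dyadic_spike :: "(nat \<Rightarrow> 'a) \<Rightarrow> 'a \<Rightarrow> real \<Rightarrow> 'a" where
  "dyadic_spike p y x = (if \<exists>n. dyadic_level n x then p (THE n. dyadic_level n x) else y)"

lemma dyadic_spike_level: "dyadic_level n x \<Longrightarrow> dyadic_spike p y x = p n"
proof -
  assume n: "dyadic_level n x"
  hence "(THE n. dyadic_level n x) = n" by (rule the_equality) (rule dyadic_level_unique[OF _ n])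
  thus ?thesis using n unfolding dyadic_spike_def by auto
qed

lemma dyadic_spike_not_level: "\<nexists>n. dyadic_level n x \<Longrightarrow> dyadic_spike p y x = y"
  unfolding dyadic_spike_def by simp

lemma dyadic_spike_image: "dyadic_spike p y ` S \<subseteq> insert y (range p)"
  unfolding dyadic_spike_def by auto

lemma H1_unit_dyadic_spike:
  fixes p :: "nat \<Rightarrow> 'a::topological_space"
  assumes "p \<longlonglongrightarrow> y" shows "H1_unit (dyadic_spike p y)"
  unfolding H1_unit_def
proof (intro allI impI)
  fix Q :: "'a set" assume "open Q"
  let ?f = "dyadic_spike p y"
  show "fsigma_in_unit ({0..1} \<inter> ?f -` Q)"
  proof (cases "y \<in> Q")
    case False
    have "{0..1} \<inter> ?f -` Q \<subseteq> \<rat>"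
    proof
      fix x assume "x \<in> {0..1} \<inter> ?f -` Q"
      hence "\<exists>n. dyadic_level n x" using False dyadic_spike_not_level[of x p y]
        by (cases "\<exists>n. dyadic_level n x") simp_all
      thus "x \<in> \<rat>" using dyadic_level_Rats by blast
    qed
    thus ?thesis by (intro countable_imp_fsigma_in_unit countable_subset[OF _ countable_rat]) auto
  next
    case True
    then obtain N where N: "\<And>n. n \<ge> N \<Longrightarrow> p n \<in> Q"
      using \<open>open Q\<close> assms unfolding tendsto_def eventually_sequentially by blast
    define E where "E = (\<Union>n<N. {x\<in>{0..1}. dyadic_level n x})"
    have "{0..1} - ?f -` Q \<subseteq> E"
    proof
      fix x assume x: "x \<in> {0..1} - ?f -` Q"
      hence "\<exists>n. dyadic_level n x" using True dyadic_spike_not_level[of x p y]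
        by (cases "\<exists>n. dyadic_level n x") simp_all
      then obtain n where n: "dyadic_level n x" ..
      have "p n \<notin> Q" using x dyadic_spike_level[OF n, of p y] by simp
      hence "n < N" using N by (meson not_le)
      thus "x \<in> E" using n x unfolding E_def by blast
    qed
    moreover have "finite E" unfolding E_def using finite_dyadic_level_unit by blast
    ultimately have "closed ({0..1} - ?f -` Q)"
      by (meson finite_imp_closed finite_subset)
    hence "openin (top_of_set {0..1}) ({0..1} - ({0..1} - ?f -` Q))"
      by (intro openin_diff) (auto intro: closed_subset)
    moreover have "{0..1} - ({0..1} - ?f -` Q) = {0..1} \<inter> ?f -` Q" by blast
    ultimately have "openin (top_of_set {0..1}) ({0..1} \<inter> ?f -` Q)" by simp
    thus ?thesis by (rule openin_imp_fsigma_in_unit)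
  qed
qed

lemma openin_interval_contains_interval:
  fixes a b :: real
  assumes "a < b" "openin (top_of_set {a..b}) Q" "Q \<noteq> {}"
  obtains c d where "c < d" "{c..d} \<subseteq> Q"
proof -
  obtain U where U: "open U" "Q = {a..b} \<inter> U" using assms(2) by (auto simp: openin_open)
  have "U \<inter> closure {a<..<b} \<noteq> {}" using assms(1,3) U(2) by auto
  then obtain z where z: "z \<in> U \<inter> {a<..<b}" using open_Int_closure_eq_empty[OF U(1)] by blast
  moreover have "open (U \<inter> {a<..<b})" using U(1) by (simp add: open_Int)
  ultimately obtain e where "e > 0" and ball: "ball z e \<subseteq> U \<inter> {a<..<b}" by (meson openE)
  have "{z..z + e/2} \<subseteq> ball z e" using \<open>e > 0\<close> by (auto simp: dist_real_def)
  hence "{z..z + e/2} \<subseteq> U \<inter> {a<..<b}" using ball by blast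
  moreover have "{a<..<b} \<subseteq> {a..b}" by auto
  ultimately have "{z..z + e/2} \<subseteq> Q" unfolding U(2) by blast
  thus ?thesis using \<open>e > 0\<close> by (intro that[of z "z + e/2"]) auto
qed

lemma pointwise_limit_eventually_maps_interval_into:
  fixes g :: "nat \<Rightarrow> real \<Rightarrow> 'a::topological_space"
  assumes "a < b" and cont: "\<And>k. continuous_on {a..b} (g k)"
    and lim: "\<And>x. x \<in> {a..b} \<Longrightarrow> (\<lambda>k. g k x) \<longlonglongrightarrow> f x"
    and "closed C" "f ` {a..b} \<subseteq> interior C"
  obtains c d m where "c < d" "{c..d} \<subseteq> {a..b}" "\<And>k. k \<ge> m \<Longrightarrow> g k ` {c..d} \<subseteq> C"
proof -
  let ?X = "top_of_set {a..b}"
  define F where "F m = (\<Inter>k\<in>{m..}. {a..b} \<inter> g k -` C)" for m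
  have F_closed: "closedin ?X (F m)" for m
    unfolding F_def using \<open>closed C\<close>
    by (intro closed_subset closed_INT ballI continuous_closed_preimage cont) auto
  have F_sub: "F m \<subseteq> {a..b}" for m unfolding F_def by auto
  have "(\<Union>m. F m) = topspace ?X"
  proof (simp, intro equalityI subsetI)
    fix x assume x: "x \<in> {a..b}"
    have "\<forall>\<^sub>F k in sequentially. g k x \<in> interior C"
      using x assms(5) by (intro topological_tendstoD[OF lim[OF x]]) auto
    then obtain m where "\<And>k. k \<ge> m \<Longrightarrow> g k x \<in> C"
      unfolding eventually_sequentially using interior_subset by blast
    thus "x \<in> (\<Union>m. F m)" using x unfolding F_def by blast
  qed (use F_sub in blast)
  hence "?X interior_of (\<Union>m. F m) \<noteq> {}"
    using \<open>a < b\<close> interior_of_topspace[of ?X] by simp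
  moreover have "completely_metrizable_space ?X"
    using completely_metrizable_space_cbox[of a b] by simp
  moreover have "countable (range F)" by simp
  ultimately obtain m where "?X interior_of F m \<noteq> {}"
    using Baire_category_alt[of ?X "range F"] F_closed by (metis rangeE)
  then obtain c d where "c < d" and cd: "{c..d} \<subseteq> ?X interior_of F m"
    using openin_interval_contains_interval[OF \<open>a < b\<close> openin_interior_of] by metis
  have "{c..d} \<subseteq> F m" using cd interior_of_subset[of ?X "F m"] by (rule order_trans)
  moreover have "g k ` F m \<subseteq> C" if "k \<ge> m" for k using that unfolding F_def by blast
  ultimately show ?thesis using that[OF \<open>c < d\<close>] F_sub by blast
qed

lemma eventually_dyadic_level_in_interval:
  fixes c d :: real
  assumes "c < d"
  shows "\<forall>\<^sub>F n in sequentially. \<exists>x\<in>{c..d}. dyadic_level n x"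
proof -
  obtain N where N: "2 / (d - c) < 2^N" using real_arch_pow[of 2 "2 / (d - c)"] by auto
  have "\<exists>x\<in>{c..d}. dyadic_level n x" if "n \<ge> N" for n
  proof -
    have "2 / (d - c) < 2^n" using N power_increasing[OF that, of "2::real"] by linarith
    hence "2 \<le> (d - c) * 2^n" using assms by (simp add: field_simps)
    thus ?thesis using dyadic_level_in_interval by metis
  qed
  thus ?thesis unfolding eventually_sequentially by blast
qed

lemma joined_by_arc_in_image_interval:
  fixes g :: "real \<Rightarrow> 'a::topological_space"
  assumes "continuous_on {c..d} g" "g ` {c..d} \<subseteq> S" "s \<in> {c..d}" "t \<in> {c..d}"
    and "g s \<in> A" "g t \<in> B"
  shows "joined_by_arc_in A B S"
  unfolding joined_by_arc_in_def
proof (intro exI conjI)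
  have seg: "linepath s t ` {0..1} \<subseteq> {c..d}"
    using closed_segment_subset[OF assms(3,4)] by (simp add: path_image_def[symmetric])
  show "continuous_on {0..1} (g \<circ> linepath s t)"
    by (intro continuous_on_compose continuous_on_subset[OF assms(1) seg] continuous_intros)
  show "(g \<circ> linepath s t) ` {0..1} \<subseteq> S"
    using seg assms(2) by (auto simp: image_comp[symmetric])
qed (use assms(5,6) in \<open>simp_all add: linepath_def\<close>)

lemma is_nhd_iff_interior: "is_nhd V y \<longleftrightarrow> y \<in> interior V"
  unfolding is_nhd_def interior_def by blast

lemma not_loc_almost_arcwise_connected_atE:
  fixes y :: "'a::first_countable_topology"
  assumes "\<not> loc_almost_arcwise_connected_at y"
  obtains V :: "'a set" and S :: "nat \<Rightarrow> 'a set"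
  where "y \<in> interior V" "\<And>k. open (S k)" "\<And>k. S k \<noteq> {}" "\<And>k. S k \<subseteq> interior V"
    "\<And>n. \<not> joined_by_arc_in (S (2*n)) (S (2*n+1)) (closure V)"
    "\<And>Q. open Q \<Longrightarrow> y \<in> Q \<Longrightarrow> \<forall>\<^sub>F k in sequentially. S k \<subseteq> Q"
proof -
  obtain V where "is_nhd V y" and bad: "\<And>U. U \<subseteq> V \<Longrightarrow> is_nhd U y \<Longrightarrow>
      \<not> (\<forall>A B. open A \<and> A \<subseteq> U \<and> A \<noteq> {} \<and> open B \<and> B \<subseteq> U \<and> B \<noteq> {} \<longrightarrow>
        joined_by_arc_in A B (closure V))"
    using assms unfolding loc_almost_arcwise_connected_at_def by blast
  hence y: "y \<in> interior V" by (simp add: is_nhd_iff_interior)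
  obtain U :: "nat \<Rightarrow> 'a set" where U: "\<And>i. open (U i)" "\<And>i. y \<in> U i"
    "\<And>Q. open Q \<Longrightarrow> y \<in> Q \<Longrightarrow> \<forall>\<^sub>F i in sequentially. U i \<subseteq> Q"
    using countable_basis_at_decseq[of y] by blast
  have "\<forall>i. \<exists>A B. open A \<and> A \<subseteq> U i \<inter> interior V \<and> A \<noteq> {} \<and>
      open B \<and> B \<subseteq> U i \<inter> interior V \<and> B \<noteq> {} \<and> \<not> joined_by_arc_in A B (closure V)"
  proof
    fix i
    have "is_nhd (U i \<inter> interior V) y" using U(1,2) y by (simp add: is_nhd_iff_interior interior_open)
    from bad[OF _ this] show "\<exists>A B. open A \<and> A \<subseteq> U i \<inter> interior V \<and> A \<noteq> {} \<and>
      open B \<and> B \<subseteq> U i \<inter> interior V \<and> B \<noteq> {} \<and> \<not> joined_by_arc_in A B (closure V)"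
      using interior_subset by (simp only: not_all not_imp conj_assoc) blast
  qed
  then obtain A B where AB: "\<And>i. open (A i) \<and> A i \<subseteq> U i \<inter> interior V \<and> A i \<noteq> {} \<and>
      open (B i) \<and> B i \<subseteq> U i \<inter> interior V \<and> B i \<noteq> {} \<and> \<not> joined_by_arc_in (A i) (B i) (closure V)"
    by metis
  define S where "S k = (if even k then A else B) (k div 2)" for k
  have S_sub: "S k \<subseteq> U (k div 2)" for k using AB unfolding S_def by auto
  show ?thesis
  proof (rule that[of V S])
    fix Q assume "open Q" "y \<in> Q"
    then obtain N where N: "\<And>i. i \<ge> N \<Longrightarrow> U i \<subseteq> Q"
      using U(3) unfolding eventually_sequentially by blast
    have "S k \<subseteq> Q" if "k \<ge> 2*N" for k
    proof -
      have "N \<le> k div 2" using that by presburger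
      thus ?thesis using N S_sub[of k] by blast
    qed
    thus "\<forall>\<^sub>F k in sequentially. S k \<subseteq> Q" unfolding eventually_sequentially by blast
  qed (use AB y in \<open>auto simp: S_def\<close>)
qed

lemma joined_by_arc_in_if_limit_of_dyadic_spike:
  fixes g :: "nat \<Rightarrow> real \<Rightarrow> 'a::topological_space"
  assumes cont: "\<And>k. continuous_on {0..1} (g k)"
    and lim: "\<And>x. x \<in> {0..1} \<Longrightarrow> (\<lambda>k. g k x) \<longlonglongrightarrow> dyadic_spike p y x"
    and S_open: "\<And>n. open (S n)" and p: "\<And>n. p n \<in> S n"
    and "closed C" "y \<in> interior C" "\<And>n. S n \<subseteq> interior C"
  obtains n where "joined_by_arc_in (S (2*n)) (S (2*n+1)) C"
proof -
  have "insert y (range p) \<subseteq> interior C" using assms(6,7) p by blast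
  with dyadic_spike_image have "dyadic_spike p y ` {0..1} \<subseteq> interior C" by (rule order_trans)
  then obtain c d m where "c < d" and cd: "{c..d} \<subseteq> {0..1}"
    and into_C: "\<And>k. k \<ge> m \<Longrightarrow> g k ` {c..d} \<subseteq> C"
    using pointwise_limit_eventually_maps_interval_into[OF zero_less_one cont lim \<open>closed C\<close>]
    by blast
  obtain N where N: "\<And>n. n \<ge> N \<Longrightarrow> \<exists>x\<in>{c..d}. dyadic_level n x"
    using eventually_dyadic_level_in_interval[OF \<open>c < d\<close>] unfolding eventually_sequentially by blast
  obtain s where s: "s \<in> {c..d}" "dyadic_level (2*N) s" using N[of "2*N"] by auto
  obtain t where t: "t \<in> {c..d}" "dyadic_level (2*N+1) t" using N[of "2*N+1"] by auto
  have "dyadic_spike p y s \<in> S (2*N)" "dyadic_spike p y t \<in> S (2*N+1)"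
    using dyadic_spike_level[OF s(2), of p y] dyadic_spike_level[OF t(2), of p y] p by simp_all
  hence "\<forall>\<^sub>F k in sequentially. g k s \<in> S (2*N)" "\<forall>\<^sub>F k in sequentially. g k t \<in> S (2*N+1)"
    using s(1) t(1) cd by (auto intro!: topological_tendstoD[OF lim] S_open)
  with eventually_ge_at_top[of m]
  have "\<forall>\<^sub>F k in sequentially. g k s \<in> S (2*N) \<and> g k t \<in> S (2*N+1) \<and> k \<ge> m"
    by (simp add: eventually_conj_iff)
  then obtain k where k: "g k s \<in> S (2*N)" "g k t \<in> S (2*N+1)" "k \<ge> m"
    unfolding eventually_sequentially by blast
  have "joined_by_arc_in (S (2*N)) (S (2*N+1)) C"
    using continuous_on_subset[OF cont cd] into_C[OF k(3)] s(1) t(1) k(1,2)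
    by (rule joined_by_arc_in_image_interval)
  thus ?thesis by (rule that)
qed

lemma shrinking_sets_selection_tendsto:
  fixes S :: "'b \<Rightarrow> 'a::topological_space set"
  assumes "\<And>k. S k \<noteq> {}" and shrink: "\<And>Q. open Q \<Longrightarrow> y \<in> Q \<Longrightarrow> \<forall>\<^sub>F k in F. S k \<subseteq> Q"
  obtains p where "\<And>k. p k \<in> S k" "(p \<longlongrightarrow> y) F"
proof
  define p where "p k = (SOME z. z \<in> S k)" for k
  show p: "p k \<in> S k" for k unfolding p_def using assms(1) by (simp add: some_in_eq)
  show "(p \<longlongrightarrow> y) F"
  proof (rule topological_tendstoI)
    fix Q assume "open Q" "y \<in> Q"
    with shrink have "\<forall>\<^sub>F k in F. S k \<subseteq> Q" by blast
    thus "\<forall>\<^sub>F k in F. p k \<in> Q" by (rule eventually_mono) (use p in blast)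
  qed
qed

theorem mainTheorem10:
  assumes "\<forall>f :: real \<Rightarrow> 'a::first_countable_topology. H1_unit f \<longrightarrow> B1_unit f"
  shows "loc_almost_arcwise_connected TYPE('a)"
  unfolding loc_almost_arcwise_connected_def
proof (rule allI, rule ccontr)
  fix y :: 'a
  assume "\<not> loc_almost_arcwise_connected_at y"
  then obtain V S where y: "y \<in> interior V" and S_open: "\<And>k. open (S k)"
    and S_ne: "\<And>k. S k \<noteq> {}" and S_sub: "\<And>k. S k \<subseteq> interior V"
    and not_joined: "\<And>n. \<not> joined_by_arc_in (S (2*n)) (S (2*n+1)) (closure V)"
    and S_shrink: "\<And>Q. open Q \<Longrightarrow> y \<in> Q \<Longrightarrow> \<forall>\<^sub>F k in sequentially. S k \<subseteq> Q"
    by (rule not_loc_almost_arcwise_connected_atE) (rule that)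
  obtain p where p: "\<And>k. p k \<in> S k" and "p \<longlonglongrightarrow> y"
    using shrinking_sets_selection_tendsto[OF S_ne S_shrink] by blast
  hence "B1_unit (dyadic_spike p y)" using assms H1_unit_dyadic_spike by blast
  then obtain g where g_cont: "\<And>k. continuous_on {0..1} (g k)"
    and g_lim: "\<And>x. x \<in> {0..1} \<Longrightarrow> (\<lambda>k. g k x) \<longlonglongrightarrow> dyadic_spike p y x"
    unfolding B1_unit_def by blast
  have "interior V \<subseteq> interior (closure V)" by (simp add: closure_subset interior_mono)
  hence "y \<in> interior (closure V)" "\<And>k. S k \<subseteq> interior (closure V)" using y S_sub by blast+
  then obtain n where "joined_by_arc_in (S (2*n)) (S (2*n+1)) (closure V)"
    using joined_by_arc_in_if_limit_of_dyadic_spike[OF g_cont g_lim S_open p closed_closure]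
    by blast
  with not_joined show False by blast
qed

end
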